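(* Let $n, C \in \mathbb{Z}_{+}$, let $\bm{x}_i \in \mathbb{R}^n$, and let $\bm{v}_1, \dots, \bm{v}_C \in \mathbb{R}^n$ be such that $\|\bm{x}_i - \bm{v}_j\|_2 > 0$ for all $j \in \{1,\dots,C\}$. For a fuzzy factor $r \in (1, +\infty)$ define the fuzzy membership degrees $$u_{ij} = u_{ij}(r) = \frac{1}{\sum_{k=1}^{C}\left(\frac{\|\bm{x}_i-\bm{v}_j\|_2^2}{\|\bm{x}_i-\bm{v}_k\|_2^2}\right)^{\frac{1}{r-1}}}, \qquad j = 1,\dots,C.$$ Then $$\lim_{r\rightarrow 1^{+}}\left(\sum_{j=1}^C (u_{ij})^r\,\|\bm{x}_i-\bm{v}_j\|_2^2\right) = \min_{j\in\{1,\dots,C\}}\|\bm{x}_i-\bm{v}_j\|_2^2 .$$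
   Context: This concerns fuzzy clustering, which solves $\min_{\mathbf{U},\mathbf{V}}\sum_{j=1}^C\sum_{i=1}^M (u_{ij})^r\|\bm{x}_i-\bm{v}_j\|_2^2$ subject to $\sum_{j=1}^C u_{ij}=1$, $u_{ij}\in[0,1]$, over data points $\bm{x}_1,\dots,\bm{x}_M\in\mathbb{R}^n$, clustering centroids $\mathbf{V}=\{\bm{v}_j\}_{j=1}^C$ and membership matrix $\mathbf{U}=[u_{ij}]$; for fixed centroids, the optimal memberships are given by the closed-form expression in the claim. The claim concerns the contribution of a single data point $\bm{x}_i$ to the objective at these optimal memberships. *)

theory Defs
  imports "HOL-Analysis.Analysis"
begin

definition fuzzy_membership ::
  "nat \<Rightarrow> (nat \<Rightarrow> real ^ 'n) \<Rightarrow> real ^ 'n \<Rightarrow> real \<Rightarrow> nat \<Rightarrow> real" where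
  "fuzzy_membership C v x r j =
     1 / (\<Sum>k = 1..C. ((norm (x - v j))\<^sup>2 / (norm (x - v k))\<^sup>2) powr (1 / (r - 1)))"

end

theory Submission
  imports Defs "HOL-Real_Asymp.Real_Asymp"
begin

text \<open>
  With \<open>s = 1/(r - 1)\<close> and \<open>m\<close> the least squared distance, multiplying numerator and
  denominator of the membership degree by \<open>m powr s\<close> turns it into the ratio
  \<open>(m/d\<^sub>j)\<^sup>s / \<Sum>\<^sub>k (m/d\<^sub>k)\<^sup>s\<close>. Every base \<open>m/d\<^sub>k\<close> lies in \<open>(0, 1]\<close> and equals \<open>1\<close> exactly for the
  nearest centroids, so as \<open>r \<rightarrow> 1\<^sup>+\<close> (i.e. \<open>s \<rightarrow> \<infinity>\<close>) the memberships tend to the uniform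
  distribution on the set of nearest centroids. The exponent \<open>r\<close> tends to \<open>1\<close>, so the
  objective tends to the average of \<open>d\<^sub>j\<close> over that set, which is \<open>m\<close>.
\<close>

definition fuzzy_membership_on :: "'i set \<Rightarrow> ('i \<Rightarrow> real) \<Rightarrow> real \<Rightarrow> 'i \<Rightarrow> real" where
  "fuzzy_membership_on I d r j = 1 / (\<Sum>k\<in>I. (d j / d k) powr (1 / (r - 1)))"

lemma fuzzy_membership_eq_fuzzy_membership_on:
  "fuzzy_membership C v x = fuzzy_membership_on {1..C} (\<lambda>j. (norm (x - v j))\<^sup>2)"
  by (auto simp: fun_eq_iff fuzzy_membership_def fuzzy_membership_on_def)

lemma fuzzy_membership_on_nonneg: "fuzzy_membership_on I d r j \<ge> 0"
  unfolding fuzzy_membership_on_def by (auto intro: sum_nonneg)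

lemma fuzzy_membership_on_eq_ratio:
  assumes "\<And>k. k \<in> I \<Longrightarrow> d k > 0" and "j \<in> I" and "m > 0"
  shows "fuzzy_membership_on I d r j
           = (m / d j) powr (1 / (r - 1)) / (\<Sum>k\<in>I. (m / d k) powr (1 / (r - 1)))"
proof -
  let ?s = "1 / (r - 1)"
  have "(d j / d k) powr ?s = (m / d k) powr ?s / (m / d j) powr ?s" if "k \<in> I" for k
  proof -
    have "d j / d k = (m / d k) / (m / d j)"
      using assms(1)[OF that] assms(1)[OF \<open>j \<in> I\<close>] \<open>m > 0\<close> by (simp add: field_simps)
    then show ?thesis
      using assms(1)[OF that] assms(1)[OF \<open>j \<in> I\<close>] \<open>m > 0\<close> by (simp add: powr_divide)
  qed
  then have "(\<Sum>k\<in>I. (d j / d k) powr ?s) = (\<Sum>k\<in>I. (m / d k) powr ?s) / (m / d j) powr ?s"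
    by (simp add: sum_divide_distrib)
  then show ?thesis
    by (simp add: fuzzy_membership_on_def)
qed

lemma tendsto_powr_at_top_le_1:
  fixes c :: real
  assumes "0 < c" "c \<le> 1" and "filterlim f at_top F"
  shows "((\<lambda>x. c powr f x) \<longlongrightarrow> (if c = 1 then 1 else 0)) F"
proof (cases "c = 1")
  case False
  with assms have "ln c < 0" by simp
  then have "filterlim (\<lambda>x. ln c * f x) at_bot F"
    by (rule filterlim_tendsto_neg_mult_at_bot[OF tendsto_const _ assms(3)])
  then have "((\<lambda>x. exp (ln c * f x)) \<longlongrightarrow> 0) F"
    by (rule filterlim_compose[OF exp_at_bot])
  with False \<open>0 < c\<close> show ?thesis
    by (simp add: powr_def mult.commute)
qed simp

lemma fuzzy_membership_on_tendsto:
  assumes "finite I" and "\<And>k. k \<in> I \<Longrightarrow> d k > 0" and "j \<in> I"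
  defines "m \<equiv> Min (d ` I)"
  shows "((\<lambda>r. fuzzy_membership_on I d r j)
           \<longlongrightarrow> (if d j = m then 1 / card {k\<in>I. d k = m} else 0)) (at_right 1)"
proof -
  have "m \<in> d ` I"
    unfolding m_def using assms(1,3) by (intro Min_in) auto
  then have "m > 0" and nearest_nonempty: "{k\<in>I. d k = m} \<noteq> {}"
    using assms(2) by auto
  have "m \<le> d k" if "k \<in> I" for k
    unfolding m_def using assms(1) that by simp
  then have base: "0 < m / d k" "m / d k \<le> 1" "m / d k = 1 \<longleftrightarrow> d k = m" if "k \<in> I" for k
    using assms(2)[OF that] \<open>m > 0\<close> that by (auto simp: field_simps)
  have exponent_at_top: "filterlim (\<lambda>r::real. 1 / (r - 1)) at_top (at_right 1)"
    by real_asymp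
  have lim: "((\<lambda>r. (m / d k) powr (1 / (r - 1))) \<longlongrightarrow> (if d k = m then 1 else 0)) (at_right 1)"
    if "k \<in> I" for k
    using tendsto_powr_at_top_le_1[OF base(1,2)[OF that] exponent_at_top] base(3)[OF that] by simp
  have "((\<lambda>r. \<Sum>k\<in>I. (m / d k) powr (1 / (r - 1)))
          \<longlongrightarrow> (\<Sum>k\<in>I. if d k = m then 1 else 0)) (at_right 1)"
    using lim by (rule tendsto_sum)
  moreover have "(\<Sum>k\<in>I. if d k = m then 1 else 0) = real (card {k\<in>I. d k = m})"
    using assms(1) by (simp add: sum.inter_filter[symmetric])
  moreover have "card {k\<in>I. d k = m} > 0"
    using assms(1) nearest_nonempty by (simp add: card_gt_0_iff)
  ultimately have "((\<lambda>r. (m / d j) powr (1 / (r - 1)) / (\<Sum>k\<in>I. (m / d k) powr (1 / (r - 1))))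
      \<longlongrightarrow> (if d j = m then 1 else 0) / card {k\<in>I. d k = m}) (at_right 1)"
    using lim[OF assms(3)] by (intro tendsto_divide) auto
  also have "(if d j = m then 1 else 0) / card {k\<in>I. d k = m}
      = (if d j = m then 1 / card {k\<in>I. d k = m} else 0)"
    by simp
  finally show ?thesis
    by (simp only: fuzzy_membership_on_eq_ratio[where d = d, OF assms(2,3) \<open>m > 0\<close>])
qed

lemma sum_uniform_on_argmin:
  fixes d :: "'i \<Rightarrow> real"
  assumes "finite I" and "{k\<in>I. d k = m} \<noteq> {}"
  shows "(\<Sum>j\<in>I. (if d j = m then 1 / card {k\<in>I. d k = m} else 0) * d j) = m"
proof -
  have "(\<Sum>j\<in>I. (if d j = m then 1 / card {k\<in>I. d k = m} else 0) * d j)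
      = (\<Sum>j\<in>I. if d j = m then m / card {k\<in>I. d k = m} else 0)"
    by (rule sum.cong) auto
  also have "\<dots> = (\<Sum>j\<in>{k\<in>I. d k = m}. m / card {k\<in>I. d k = m})"
    using assms(1) by (rule sum.inter_filter[symmetric])
  also have "\<dots> = m"
    using assms by simp
  finally show ?thesis .
qed

lemma fuzzy_objective_tendsto_Min:
  assumes "finite I" and "I \<noteq> {}" and "\<And>k. k \<in> I \<Longrightarrow> d k > 0"
  shows "((\<lambda>r. \<Sum>j\<in>I. fuzzy_membership_on I d r j powr r * d j) \<longlongrightarrow> Min (d ` I)) (at_right 1)"
proof -
  let ?m = "Min (d ` I)"
  let ?u = "\<lambda>j. if d j = ?m then 1 / card {k\<in>I. d k = ?m} else 0"
  have "((\<lambda>r. fuzzy_membership_on I d r j powr r * d j) \<longlongrightarrow> ?u j * d j) (at_right 1)"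
    if "j \<in> I" for j
  proof -
    have "((\<lambda>r. fuzzy_membership_on I d r j powr r) \<longlongrightarrow> ?u j powr 1) (at_right 1)"
      by (rule tendsto_powr'[OF fuzzy_membership_on_tendsto[OF assms(1,3) that] tendsto_ident_at])
        (auto intro!: always_eventually fuzzy_membership_on_nonneg)
    moreover have "?u j powr 1 = ?u j"
      by simp
    ultimately show ?thesis
      by (intro tendsto_mult tendsto_const) simp
  qed
  then have "((\<lambda>r. \<Sum>j\<in>I. fuzzy_membership_on I d r j powr r * d j)
      \<longlongrightarrow> (\<Sum>j\<in>I. ?u j * d j)) (at_right 1)"
    by (intro tendsto_sum) simp
  moreover have "(\<Sum>j\<in>I. ?u j * d j) = ?m"
  proof (rule sum_uniform_on_argmin[OF assms(1)])
    have "?m \<in> d ` I"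
      using assms(1,2) by simp
    then show "{k\<in>I. d k = ?m} \<noteq> {}"
      by auto
  qed
  ultimately show ?thesis
    by simp
qed

theorem proposition1:
  fixes C :: nat and x :: "real ^ 'n" and v :: "nat \<Rightarrow> real ^ 'n"
  assumes "C \<ge> 1"
    and "\<And>j. j \<in> {1..C} \<Longrightarrow> norm (x - v j) > 0"
  shows "((\<lambda>r. \<Sum>j = 1..C. (fuzzy_membership C v x r j) powr r * (norm (x - v j))\<^sup>2)
           \<longlongrightarrow> (MIN j\<in>{1..C}. (norm (x - v j))\<^sup>2)) (at_right 1)"
  unfolding fuzzy_membership_eq_fuzzy_membership_on
  using assms by (intro fuzzy_objective_tendsto_Min) auto

end
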